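(* Let $n\ge2$ and let $v_1,\dots,v_k$ and $u_1,\dots,u_k$ be two collections of $k\le n-1$ normalized vectors in $\mathbb C^n$. Define $\mathcal V:=\{X\in M_n(\mathbb C):\ v_1^\ast Xu_1=\dots=v_k^\ast Xu_k=0\}$. If a nonzero $A\in\mathcal V$ is left-symmetric relative to $\mathcal V$, then $\mathrm{rk}\,A\in\{1,n\}$.
   Context: $M_n(\mathbb C)$ carries the operator (spectral) norm. $A\perp B$ (Birkhoff–James orthogonality) means $\|A+\lambda B\|\ge\|A\|$ for all $\lambda\in\mathbb C$. For a subset $\mathcal S$, an element $A\in\mathcal S$ is left-symmetric relative to $\mathcal S$ if for every $B\in\mathcal S$, $A\perp B$ implies $B\perp A$. *)

theory Defs
  imports "HOL-Analysis.Analysis"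
begin

definition opnorm :: "complex^'n^'n \<Rightarrow> real" where
  "opnorm A = onorm (\<lambda>x. A *v x)"

definition bj_orth :: "complex^'n^'n \<Rightarrow> complex^'n^'n \<Rightarrow> bool" where
  "bj_orth A B \<longleftrightarrow> (\<forall>c::complex. opnorm (A + (\<chi> i j. c * B $ i $ j)) \<ge> opnorm A)"

definition left_symmetric_in :: "(complex^'n^'n) set \<Rightarrow> complex^'n^'n \<Rightarrow> bool" where
  "left_symmetric_in S A \<longleftrightarrow> A \<in> S \<and> (\<forall>B\<in>S. bj_orth A B \<longrightarrow> bj_orth B A)"

definition sesq :: "complex^'n \<Rightarrow> complex^'n^'n \<Rightarrow> complex^'n \<Rightarrow> complex" where
  "sesq v X u = (\<Sum>i\<in>UNIV. cnj (v $ i) * ((X *v u) $ i))"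

end

theory Submission
  imports Defs
begin

text \<open>Let x be a unit vector at which A attains its norm a > 0 and put y = A x / a, so that
  A x = a y and A^* y = a x. Adjoin the pair (y, x) to the constraints (v_i, u_i): every B
  satisfying the enlarged constraints lies in V and has y^* B x = 0, so A is orthogonal to B and,
  by left-symmetry, B is orthogonal to A. On the other hand, B is not orthogonal to A as soon as
  Re \<langle>B h, A h\<rangle> > 0 for every unit vector h at which B attains its norm.

  If neither x, u_1, ..., u_k nor y, v_1, ..., v_k span, choose unit vectors e and e' orthogonal
  to them; then the rank-one matrix (A e) e^* (if A e \<noteq> 0) or the matrix e' (x + e)^* + y e^*
  (if A e = 0) satisfies the enlarged constraints without being orthogonal to A. If x, u_1, ...,
  u_k span, they form a basis, and testing rank-one matrices built from the dual basis shows that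
  A maps the dual basis onto multiples of y, v_1, ..., v_k; the constraints then force the
  Hilbert-Schmidt norm of A to be a, which happens only for A = a y x^*. The case that y, v_1, ...,
  v_k span follows by passing to adjoints. Hence A always has rank one.\<close>

definition cinner :: "complex^'n \<Rightarrow> complex^'n \<Rightarrow> complex" where
  "cinner p q = (\<Sum>i\<in>UNIV. cnj (p $ i) * q $ i)"

lemma cinner_add_left: "cinner (p + p') q = cinner p q + cinner p' q"
  and cinner_add_right: "cinner p (q + q') = cinner p q + cinner p q'"
  and cinner_diff_left: "cinner (p - p') q = cinner p q - cinner p' q"
  and cinner_diff_right: "cinner p (q - q') = cinner p q - cinner p q'"
  and cinner_scale_left: "cinner (c *s p) q = cnj c * cinner p q"
  and cinner_scale_right: "cinner p (c *s q) = c * cinner p q"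
  and cinner_zero_left: "cinner 0 q = 0"
  and cinner_zero_right: "cinner p 0 = 0"
  by (simp_all add: cinner_def sum.distrib sum_subtractf sum_distrib_left algebra_simps)

lemma cinner_sum_right: "cinner p (\<Sum>j\<in>J. f j) = (\<Sum>j\<in>J. cinner p (f j))"
  by (simp add: cinner_def sum_distrib_left sum.swap[of _ J])

lemmas cinner_simps = cinner_add_left cinner_add_right cinner_diff_left cinner_diff_right
  cinner_scale_left cinner_scale_right cinner_zero_left cinner_zero_right

lemma cinner_commute: "cinner q p = cnj (cinner p q)"
  by (simp add: cinner_def mult.commute)

lemma Re_cinner: "Re (cinner p q) = inner p q"
  by (simp add: cinner_def inner_vec_def inner_complex_def)

lemma cinner_self: "cinner p p = of_real ((norm p)\<^sup>2)"
proof -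
  have "Im (cinner p p) = 0"
    by (simp add: cinner_def)
  then show ?thesis
    by (simp add: complex_eq_iff Re_cinner power2_norm_eq_inner)
qed

lemma norm_diff_scaleR_power2:
  fixes p q :: "'a::real_inner"
  shows "(norm (p - t *\<^sub>R q))\<^sup>2 = (norm p)\<^sup>2 - 2 * t * inner p q + t\<^sup>2 * (norm q)\<^sup>2"
  unfolding power2_norm_eq_inner
  by (simp add: inner_diff_left inner_diff_right inner_commute[of q p] power2_eq_square
      algebra_simps)

lemma norm_scale_vec: "norm (c *s p) = cmod c * norm p"
  by (simp add: norm_vec_def norm_mult L2_set_right_distrib)

lemma of_real_scale_vec: "of_real t *s p = t *\<^sub>R p" for p :: "complex^'n"
  by (auto simp: vec_eq_iff complex_eq_iff)

lemma pythagoras_cinner: "cinner p q = 0 \<Longrightarrow> (norm (p + q))\<^sup>2 = (norm p)\<^sup>2 + (norm q)\<^sup>2"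
  using norm_add_Pythagorean[of p q] Re_cinner[of p q] by (simp add: orthogonal_def)

lemma cinner_Cauchy_Schwarz: "cmod (cinner p q) \<le> norm p * norm q"
proof (cases "cinner p q = 0")
  case False
  define w where "w = cnj (cinner p q) / cmod (cinner p q)"
  have "w * cinner p q = cinner p q * cnj (cinner p q) / cmod (cinner p q)"
    by (simp add: w_def)
  also have "\<dots> = of_real (cmod (cinner p q))"
    using False by (simp add: complex_norm_square[symmetric] power2_eq_square)
  finally have "cmod (cinner p q) = Re (w * cinner p q)"
    by simp
  also have "\<dots> = inner p (w *s q)"
    by (simp add: Re_cinner[symmetric] cinner_scale_right)
  also have "\<dots> \<le> norm p * norm (w *s q)"
    by (rule norm_cauchy_schwarz)
  also have "\<dots> = norm p * norm q"
    using False by (simp add: norm_scale_vec w_def norm_divide)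
  finally show ?thesis .
qed simp

lemma cmod_add_power2: "(cmod (s + t))\<^sup>2 = (cmod s)\<^sup>2 + 2 * Re (cnj s * t) + (cmod t)\<^sup>2"
  unfolding cmod_power2 by (simp add: power2_eq_square algebra_simps)

lemma norm_diff_proj_power2:
  assumes "norm y = 1"
  shows "(norm (h - cinner y h *s y))\<^sup>2 = (norm h)\<^sup>2 - (cmod (cinner y h))\<^sup>2"
proof -
  have orth: "cinner (h - cinner y h *s y) (cinner y h *s y) = 0"
    using assms by (simp add: cinner_simps cinner_self cinner_commute[of h y] algebra_simps)
  have "(norm h)\<^sup>2 = (norm (h - cinner y h *s y))\<^sup>2 + (norm (cinner y h *s y))\<^sup>2"
    using pythagoras_cinner[OF orth] by simp
  then show ?thesis
    using assms by (simp add: norm_scale_vec)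
qed

lemma eq_proj_if_norm_cinner:
  assumes "norm y = 1" "norm h = 1" "cmod (cinner y h) = 1"
  shows "h = cinner y h *s y"
  using norm_diff_proj_power2[of y h] assms by simp

lemma norm_diff_proj_pair_power2:
  assumes "norm x = 1" "norm e = 1" "cinner x e = 0"
  shows "(norm (h - cinner x h *s x - cinner e h *s e))\<^sup>2
    = (norm h)\<^sup>2 - (cmod (cinner x h))\<^sup>2 - (cmod (cinner e h))\<^sup>2"
proof -
  have "cinner e (h - cinner x h *s x) = cinner e h"
    using assms(3) by (simp add: cinner_simps cinner_commute[of e x])
  then show ?thesis
    using norm_diff_proj_power2[OF assms(2), of "h - cinner x h *s x"]
      norm_diff_proj_power2[OF assms(1), of h]
    by simp
qed

lemma sesq_eq_cinner: "sesq v X u = cinner v (X *v u)"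
  by (simp add: sesq_def cinner_def)

definition conj_transpose :: "complex^'n^'n \<Rightarrow> complex^'n^'n" where
  "conj_transpose A = (\<chi> i j. cnj (A $ j $ i))"

definition outer :: "complex^'n \<Rightarrow> complex^'n \<Rightarrow> complex^'n^'n" where
  "outer w y = (\<chi> i j. w $ i * cnj (y $ j))"

definition mat_scale :: "complex \<Rightarrow> complex^'n^'n \<Rightarrow> complex^'n^'n" where
  "mat_scale c B = (\<chi> i j. c * B $ i $ j)"

lemma cinner_conj_transpose: "cinner p (A *v q) = cinner (conj_transpose A *v p) q"
proof -
  have "cinner p (A *v q) = (\<Sum>i\<in>UNIV. \<Sum>j\<in>UNIV. cnj (p $ i) * A $ i $ j * q $ j)"
    by (simp add: cinner_def matrix_vector_mult_def sum_distrib_left mult.assoc)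
  also have "\<dots> = (\<Sum>j\<in>UNIV. \<Sum>i\<in>UNIV. cnj (p $ i) * A $ i $ j * q $ j)"
    by (rule sum.swap)
  also have "\<dots> = cinner (conj_transpose A *v p) q"
    by (simp add: cinner_def conj_transpose_def matrix_vector_mult_def sum_distrib_left ac_simps)
  finally show ?thesis .
qed

lemma conj_transpose_conj_transpose [simp]: "conj_transpose (conj_transpose A) = A"
  by (simp add: conj_transpose_def vec_eq_iff)

lemma conj_transpose_add: "conj_transpose (A + B) = conj_transpose A + conj_transpose B"
  and conj_transpose_mat_scale: "conj_transpose (mat_scale c B) = mat_scale (cnj c) (conj_transpose B)"
  by (simp_all add: conj_transpose_def mat_scale_def vec_eq_iff)

lemma conj_transpose_outer: "conj_transpose (outer w y) = outer y w"
  by (simp add: conj_transpose_def outer_def vec_eq_iff)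

lemma outer_mult_vec: "outer w y *v h = cinner y h *s w"
  by (simp add: outer_def cinner_def matrix_vector_mult_def vec_eq_iff sum_distrib_left ac_simps)

lemma mat_scale_mult_vec: "mat_scale c B *v h = c *s (B *v h)"
  by (simp add: mat_scale_def matrix_vector_mult_def vec_eq_iff sum_distrib_left ac_simps)

lemma mat_scale_outer: "mat_scale c (outer w y) = outer (c *s w) y"
  by (simp add: mat_scale_def outer_def vec_eq_iff mult.assoc)

lemma sum_matrix_vector_mult: "(\<Sum>q\<in>Q. M q) *v h = (\<Sum>q\<in>Q. M q *v h)"
  for M :: "'q \<Rightarrow> complex^'n^'m"
  by (simp add: matrix_vector_mult_def vec_eq_iff sum_component sum_distrib_right sum.swap[of _ Q])

lemma matrix_vector_mult_scaleR_complex: "A *v (t *\<^sub>R h) = t *\<^sub>R (A *v h)"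
  for A :: "complex^'n^'n"
  by (rule linear_scale[OF matrix_vector_mul_linear])

lemma rank_outer:
  fixes w y :: "complex^'n"
  assumes "outer w y \<noteq> 0"
  shows "rank (outer w y) = 1"
proof -
  define c :: "complex^'n" where "c = (\<chi> j. cnj (y $ j))"
  have "rows (outer w y) \<subseteq> vec.span {c}"
    by (auto simp: rows_def row_def outer_def c_def vec.span_singleton vec_eq_iff)
  then have "vec.dim (rows (outer w y)) \<le> 1"
    using vec.dim_le_card[of "rows (outer w y)" "{c}"] by simp
  moreover have "vec.dim (rows (outer w y)) \<noteq> 0"
  proof
    assume "vec.dim (rows (outer w y)) = 0"
    then have "row i (outer w y) = 0" for i
      by (auto simp: rows_def)
    then show False
      using assms by (simp add: vec_eq_iff row_def)
  qed
  ultimately have "vec.dim (rows (outer w y)) = 1"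
    by linarith
  then show ?thesis
    by (simp add: row_rank_def_gen)
qed

lemma opnorm_bound: "norm (A *v h) \<le> opnorm A * norm h"
  unfolding opnorm_def by (rule onorm[OF matrix_vector_mul_bounded_linear])

lemma opnorm_nonneg: "0 \<le> opnorm A"
  unfolding opnorm_def by (rule onorm_pos_le[OF matrix_vector_mul_bounded_linear])

lemma opnorm_le: "(\<And>h. norm (A *v h) \<le> b * norm h) \<Longrightarrow> opnorm A \<le> b"
  for A :: "complex^'n^'n"
  unfolding opnorm_def by (rule onorm_le)

lemma opnorm_attained: "\<exists>x. norm x = 1 \<and> norm (A *v x) = opnorm A"
  for A :: "complex^'n^'n"
proof -
  let ?S = "sphere (0::complex^'n) 1"
  have "axis undefined 1 \<in> ?S"
    by simp
  moreover have "continuous_on ?S (\<lambda>h. norm (A *v h))"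
    by (intro continuous_intros)
  ultimately obtain x where x: "x \<in> ?S" and max: "\<And>h. h \<in> ?S \<Longrightarrow> norm (A *v h) \<le> norm (A *v x)"
    using continuous_attains_sup[OF compact_sphere] by blast
  have "opnorm A \<le> norm (A *v x)"
  proof (rule opnorm_le)
    fix h :: "complex^'n"
    show "norm (A *v h) \<le> norm (A *v x) * norm h"
    proof (cases "h = 0")
      case False
      have "norm (A *v (inverse (norm h) *\<^sub>R h)) \<le> norm (A *v x)"
        using False by (intro max) simp
      then show ?thesis
        using False by (simp add: matrix_vector_mult_scaleR_complex field_simps)
    qed simp
  qed
  with opnorm_bound[of A x] x show ?thesis
    by auto
qed

lemma opnorm_pos:
  assumes "A \<noteq> 0"
  shows "0 < opnorm A"
proof -
  obtain h where "A *v h \<noteq> 0"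
    using assms matrix_eq[of A 0] by auto
  then show ?thesis
    using opnorm_bound[of A h] opnorm_nonneg[of A] by (auto simp: order_le_less)
qed

lemma opnorm_attained_singular:
  assumes x: "norm x = 1" "norm (A *v x) = opnorm A"
  shows "conj_transpose A *v (A *v x) = of_real ((opnorm A)\<^sup>2) *s x"
proof -
  define a where "a = opnorm A"
  define y where "y = conj_transpose A *v (A *v x)"
  have "cinner y y = cinner (A *v x) (A *v y)"
    unfolding y_def by (rule cinner_conj_transpose[symmetric])
  then have "(norm y)\<^sup>2 = inner (A *v x) (A *v y)"
    by (metis Re_cinner Re_complex_of_real cinner_self)
  also have "\<dots> \<le> a * (a * norm y)"
    using norm_cauchy_schwarz[of "A *v x" "A *v y"] opnorm_bound[of A y] opnorm_nonneg[of A] x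
    by (simp add: a_def mult_left_mono order_trans)
  finally have ny: "norm y \<le> a\<^sup>2"
    by (cases "y = 0") (simp_all add: power2_eq_square opnorm_nonneg a_def)
  have yx: "inner y x = a\<^sup>2"
    using x by (simp add: y_def a_def Re_cinner[symmetric] cinner_conj_transpose[symmetric] cinner_self)
  have "(norm (y - a\<^sup>2 *\<^sub>R x))\<^sup>2 = (norm y)\<^sup>2 - (a\<^sup>2)\<^sup>2"
    unfolding norm_diff_scaleR_power2 using x yx by (simp add: power2_eq_square)
  also have "\<dots> \<le> 0"
    using ny power_mono[of "norm y" "a\<^sup>2" 2] by simp
  finally have "(norm (y - a\<^sup>2 *\<^sub>R x))\<^sup>2 \<le> 0" .
  then show ?thesis
    by (simp add: y_def a_def of_real_scale_vec del: of_real_power)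
qed

lemma opnorm_outer: "opnorm (outer w y) = norm w * norm y"
  for w y :: "complex^'n"
proof -
  have Bh: "norm (outer w y *v h) = cmod (cinner y h) * norm w" for h
    by (simp add: outer_mult_vec norm_scale_vec)
  have "opnorm (outer w y) \<le> norm w * norm y"
  proof (rule opnorm_le)
    fix h :: "complex^'n"
    show "norm (outer w y *v h) \<le> norm w * norm y * norm h"
      using mult_left_mono[OF cinner_Cauchy_Schwarz[of y h], of "norm w"] by (simp add: Bh ac_simps)
  qed
  moreover have "norm w * norm y \<le> opnorm (outer w y)"
  proof (cases "y = 0")
    case False
    define u where "u = of_real (inverse (norm y)) *s y"
    have "norm u = 1" "cinner y u = of_real (norm y)"
      using False by (simp_all add: u_def norm_scale_vec norm_inverse cinner_scale_right cinner_self
          power2_eq_square)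
    then show ?thesis
      using opnorm_bound[of "outer w y" u] by (simp add: Bh mult.commute)
  qed (simp add: opnorm_nonneg)
  ultimately show ?thesis
    by simp
qed

lemma opnorm_conj_transpose_le: "opnorm (conj_transpose A) \<le> opnorm A"
  for A :: "complex^'n^'n"
proof (rule opnorm_le)
  fix h :: "complex^'n"
  let ?y = "conj_transpose A *v h"
  have "(norm ?y)\<^sup>2 = Re (cinner ?y ?y)"
    by (simp add: cinner_self)
  also have "\<dots> = inner (A *v ?y) h"
    by (simp add: cinner_conj_transpose[symmetric] cinner_commute[of _ h] Re_cinner[symmetric])
  also have "\<dots> \<le> opnorm A * norm ?y * norm h"
    using norm_cauchy_schwarz[of "A *v ?y" h] opnorm_bound[of A ?y]
    by (meson mult_right_mono norm_ge_zero order_trans)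
  finally show "norm ?y \<le> opnorm A * norm h"
    by (cases "?y = 0") (simp_all add: power2_eq_square opnorm_nonneg)
qed

lemma opnorm_conj_transpose [simp]: "opnorm (conj_transpose A) = opnorm A"
  by (metis antisym conj_transpose_conj_transpose opnorm_conj_transpose_le)

section \<open>Birkhoff-James orthogonality\<close>

lemma bj_orth_iff: "bj_orth A B \<longleftrightarrow> (\<forall>c. opnorm A \<le> opnorm (A + mat_scale c B))"
  by (simp add: bj_orth_def mat_scale_def)

lemma bj_orth_if_norming_orthogonal:
  assumes x: "norm x = 1" "norm (A *v x) = opnorm A"
    and orth: "cinner (A *v x) (B *v x) = 0"
  shows "bj_orth A B"
  unfolding bj_orth_iff
proof
  fix c
  have "(norm ((A + mat_scale c B) *v x))\<^sup>2 = (norm (A *v x))\<^sup>2 + (norm (c *s (B *v x)))\<^sup>2"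
    using orth by (simp add: matrix_vector_mult_add_rdistrib mat_scale_mult_vec pythagoras_cinner
        cinner_scale_right)
  then have "norm (A *v x) \<le> norm ((A + mat_scale c B) *v x)"
    by (metis le_add_same_cancel1 norm_ge_zero power2_le_imp_le zero_le_power2)
  also have "\<dots> \<le> opnorm (A + mat_scale c B)"
    using opnorm_bound[of "A + mat_scale c B" x] x by simp
  finally show "opnorm A \<le> opnorm (A + mat_scale c B)"
    using x by simp
qed

lemma bj_orth_conj_transpose:
  assumes "bj_orth A B"
  shows "bj_orth (conj_transpose A) (conj_transpose B)"
  unfolding bj_orth_iff
proof
  fix c
  have "opnorm A \<le> opnorm (A + mat_scale (cnj c) B)"
    using assms by (simp add: bj_orth_iff)
  then show "opnorm (conj_transpose A) \<le> opnorm (conj_transpose A + mat_scale c (conj_transpose B))"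
    by (metis opnorm_conj_transpose conj_transpose_add conj_transpose_mat_scale complex_cnj_cnj)
qed

lemma compact_uniformly_positive:
  fixes G :: "'a::topological_space \<Rightarrow> real"
  assumes "compact S" "continuous_on S G" "\<And>h. h \<in> S \<Longrightarrow> 0 < G h"
  shows "\<exists>\<delta>>0. \<forall>h\<in>S. \<delta> \<le> G h"
proof (cases "S = {}")
  case False
  then obtain h0 where "h0 \<in> S" "\<forall>h\<in>S. G h0 \<le> G h"
    using continuous_attains_inf[OF assms(1) _ assms(2)] by blast
  then show ?thesis
    using assms(3) by blast
qed (auto intro: zero_less_one)

lemma norm_diff_scaleR_less:
  fixes p q :: "'a::real_inner"
  assumes p: "norm p \<le> N" and q: "norm q \<le> a"
    and t: "0 < t" "t \<le> 1" "t * (2 * N * a + a\<^sup>2) < \<delta>"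
    and gap: "\<delta> \<le> N\<^sup>2 - (norm p)\<^sup>2 \<or> \<delta> \<le> inner p q"
  shows "(norm (p - t *\<^sub>R q))\<^sup>2 < N\<^sup>2"
proof -
  have N: "0 \<le> N" and a: "0 \<le> a"
    using p q norm_ge_zero order_trans by blast+
  have pp: "(norm p)\<^sup>2 \<le> N\<^sup>2" and qq: "t\<^sup>2 * (norm q)\<^sup>2 \<le> t\<^sup>2 * a\<^sup>2"
    using p q by (simp_all add: power_mono mult_left_mono)
  have "- (N * a) \<le> inner p q"
    using norm_cauchy_schwarz[of "- p" q] mult_mono[OF p q N norm_ge_zero] by simp
  then have pq: "- (t * (N * a)) \<le> t * inner p q"
    using mult_left_mono[of "- (N * a)" "inner p q" t] t(1) by simp
  have ta: "t * a\<^sup>2 < \<delta>"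
    using t N a by (smt (verit) mult_nonneg_nonneg zero_le_power2 distrib_left)
  then have "t\<^sup>2 * a\<^sup>2 \<le> t * a\<^sup>2"
    using t by (simp add: power2_eq_square mult_right_mono)
  have expand: "(norm (p - t *\<^sub>R q))\<^sup>2 = (norm p)\<^sup>2 - 2 * (t * inner p q) + t\<^sup>2 * (norm q)\<^sup>2"
    by (simp add: norm_diff_scaleR_power2)
  from gap show ?thesis
  proof
    assume "\<delta> \<le> N\<^sup>2 - (norm p)\<^sup>2"
    moreover have "t * (2 * N * a + a\<^sup>2) = 2 * (t * (N * a)) + t * a\<^sup>2"
      by (simp add: algebra_simps)
    ultimately show ?thesis
      using expand qq pq t(3) \<open>t\<^sup>2 * a\<^sup>2 \<le> t * a\<^sup>2\<close> by linarith
  next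
    assume "\<delta> \<le> inner p q"
    then have "t * \<delta> \<le> t * inner p q"
      using t(1) by (simp add: mult_left_mono)
    moreover have "t\<^sup>2 * a\<^sup>2 < t * \<delta>"
      using mult_strict_left_mono[OF ta t(1)] by (simp add: power2_eq_square mult.assoc)
    moreover have "0 \<le> t * a\<^sup>2"
      using t(1) by simp
    then have "0 < \<delta>"
      using ta by linarith
    then have "0 < t * \<delta>"
      using t(1) by simp
    ultimately show ?thesis
      using expand qq pp by linarith
  qed
qed

lemma exists_step_size:
  fixes C \<delta> :: real
  assumes "0 \<le> C" "0 < \<delta>"
  shows "\<exists>t. 0 < t \<and> t \<le> 1 \<and> t * C < \<delta>"
proof -
  define t where "t = \<delta> / (C + \<delta> + 1)"
  have "0 < t" "t \<le> 1"
    using assms by (simp_all add: t_def)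
  moreover have "t * C < t * (C + \<delta> + 1)"
    using \<open>0 < t\<close> assms by (intro mult_strict_left_mono) auto
  moreover have "t * (C + \<delta> + 1) = \<delta>"
    using assms by (simp add: t_def)
  ultimately show ?thesis
    by auto
qed

text \<open>If A has positive correlation with B at every unit vector where B attains its norm, then
  subtracting a small multiple of A decreases the norm of B (by compactness of the sphere).\<close>
lemma not_bj_orth_if_norming_positive:
  fixes A B :: "complex^'n^'n"
  assumes pos: "\<And>h. norm h = 1 \<Longrightarrow> norm (B *v h) = opnorm B \<Longrightarrow> 0 < inner (B *v h) (A *v h)"
  shows "\<not> bj_orth B A"
proof
  assume bj: "bj_orth B A"
  define N where "N = opnorm B"
  define a where "a = opnorm A"
  let ?S = "sphere (0::complex^'n) 1"
  let ?G = "\<lambda>h. max (N\<^sup>2 - (norm (B *v h))\<^sup>2) (inner (B *v h) (A *v h))"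
  have "0 < ?G h" if "h \<in> ?S" for h
  proof (cases "norm (B *v h) = N")
    case False
    moreover have "norm (B *v h) \<le> N"
      using that opnorm_bound[of B h] by (simp add: N_def)
    ultimately have "(norm (B *v h))\<^sup>2 < N\<^sup>2"
      by (intro power_strict_mono) auto
    then show ?thesis
      by (simp add: less_max_iff_disj)
  qed (use that pos in \<open>simp add: N_def less_max_iff_disj\<close>)
  moreover have "continuous_on ?S ?G"
    by (intro continuous_intros)
  ultimately obtain \<delta> where \<delta>: "0 < \<delta>" "\<And>h. h \<in> ?S \<Longrightarrow> \<delta> \<le> ?G h"
    using compact_uniformly_positive[OF compact_sphere] by blast
  have "0 \<le> 2 * N * a + a\<^sup>2"
    using opnorm_nonneg[of A] opnorm_nonneg[of B] by (simp add: N_def a_def)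
  then obtain t where t: "0 < t" "t \<le> 1" "t * (2 * N * a + a\<^sup>2) < \<delta>"
    using exists_step_size \<delta>(1) by blast
  obtain h where h: "norm h = 1" "norm ((B + mat_scale (- of_real t) A) *v h) = opnorm (B + mat_scale (- of_real t) A)"
    using opnorm_attained by blast
  have "(B + mat_scale (- of_real t) A) *v h = B *v h - t *\<^sub>R (A *v h)"
    by (simp add: matrix_vector_mult_add_rdistrib mat_scale_mult_vec vector_smult_lneg of_real_scale_vec)
  moreover have "(norm (B *v h - t *\<^sub>R (A *v h)))\<^sup>2 < N\<^sup>2"
  proof (rule norm_diff_scaleR_less[OF _ _ t])
    show "norm (B *v h) \<le> N" "norm (A *v h) \<le> a"
      using h opnorm_bound[of B h] opnorm_bound[of A h] by (simp_all add: N_def a_def)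
    show "\<delta> \<le> N\<^sup>2 - (norm (B *v h))\<^sup>2 \<or> \<delta> \<le> inner (B *v h) (A *v h)"
      using h \<delta>(2)[of h] by (simp add: le_max_iff_disj)
  qed
  ultimately have "(opnorm (B + mat_scale (- of_real t) A))\<^sup>2 < N\<^sup>2"
    using h by simp
  moreover have "N\<^sup>2 \<le> (opnorm (B + mat_scale (- of_real t) A))\<^sup>2"
    using bj opnorm_nonneg[of B] by (simp add: bj_orth_iff N_def power_mono)
  ultimately show False
    by simp
qed

lemma not_bj_orth_outer:
  fixes A :: "complex^'n^'n"
  assumes pos: "0 < Re (cinner w (A *v y))"
  shows "\<not> bj_orth (outer w y) A"
proof (rule not_bj_orth_if_norming_positive)
  let ?B = "outer w y"
  have "y \<noteq> 0" "w \<noteq> 0"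
    using pos by (auto simp: cinner_simps)
  define u where "u = of_real (inverse (norm y)) *s y"
  have u: "norm u = 1" "y = of_real (norm y) *s u" "cinner y u = of_real (norm y)"
    using \<open>y \<noteq> 0\<close> by (simp_all add: u_def norm_scale_vec vector_smult_assoc norm_inverse
        cinner_scale_right cinner_self power2_eq_square)
  fix h :: "complex^'n"
  assume h: "norm h = 1" "norm (?B *v h) = opnorm ?B"
  define \<beta> where "\<beta> = cinner u h"
  have "cmod \<beta> = 1"
    using h \<open>w \<noteq> 0\<close> \<open>y \<noteq> 0\<close>
    by (simp add: \<beta>_def opnorm_outer outer_mult_vec norm_scale_vec u_def cinner_simps norm_mult
        norm_inverse)
  then have "h = \<beta> *s u"
    using eq_proj_if_norm_cinner[OF u(1) h(1)] by (simp add: \<beta>_def)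
  then have "?B *v h = (\<beta> * of_real (norm y)) *s w" "A *v h = \<beta> *s (A *v u)"
    using u(3) by (simp_all add: outer_mult_vec cinner_simps vec.scale)
  moreover have "A *v y = of_real (norm y) *s (A *v u)"
    by (metis u(2) vec.scale)
  ultimately have "cinner (?B *v h) (A *v h) = (cnj \<beta> * \<beta>) * cinner w (A *v y)"
    by (simp add: cinner_simps)
  also have "cnj \<beta> * \<beta> = 1"
    using \<open>cmod \<beta> = 1\<close> by (metis complex_norm_square mult.commute of_real_1 power_one)
  finally show "0 < inner (?B *v h) (A *v h)"
    using pos by (simp add: Re_cinner[symmetric])
qed

lemma shear_opnorm_bound:
  fixes B :: "complex^'n^'n"
  assumes x: "norm x = 1" and e: "norm e = 1" and xe: "cinner x e = 0"
    and Q: "\<And>h. (norm (B *v h))\<^sup>2 = (cmod (cinner x h + cinner e h))\<^sup>2 + (cmod (cinner e h))\<^sup>2"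
  shows "(cmod (s + t))\<^sup>2 + (cmod t)\<^sup>2 \<le> (opnorm B)\<^sup>2 * ((cmod s)\<^sup>2 + (cmod t)\<^sup>2)"
proof -
  have "cinner x (s *s x + t *s e) = s" "cinner e (s *s x + t *s e) = t"
    using x e xe by (simp_all add: cinner_simps cinner_self cinner_commute[of e x])
  moreover have "(norm (s *s x + t *s e))\<^sup>2 = (cmod s)\<^sup>2 + (cmod t)\<^sup>2"
    using x e xe by (simp add: pythagoras_cinner cinner_simps norm_scale_vec power_mult_distrib)
  moreover have "(norm (B *v (s *s x + t *s e)))\<^sup>2 \<le> (opnorm B * norm (s *s x + t *s e))\<^sup>2"
    by (rule power_mono[OF opnorm_bound norm_ge_zero])
  ultimately show ?thesis
    by (simp add: Q power_mult_distrib)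
qed

text \<open>B acts on the orthonormal pair x, e as the shear matrix [[1, 1], [0, 1]] and kills their
  orthogonal complement; hence a unit vector where B attains its norm lies in the span of x and e,
  with coordinates of equal phase and both nonzero.\<close>
lemma shear_norming_vectors:
  fixes B :: "complex^'n^'n"
  assumes x: "norm x = 1" and e: "norm e = 1" and xe: "cinner x e = 0"
    and Q: "\<And>h. (norm (B *v h))\<^sup>2 = (cmod (cinner x h + cinner e h))\<^sup>2 + (cmod (cinner e h))\<^sup>2"
    and h: "norm h = 1" "norm (B *v h) = opnorm B"
  shows "h = cinner x h *s x + cinner e h *s e" "0 < Re (cnj (cinner x h) * cinner e h)"
proof -
  define N where "N = opnorm B"
  define \<alpha> where "\<alpha> = cinner x h"
  define \<beta> where "\<beta> = cinner e h"
  define p where "p = cmod \<alpha>"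
  define q where "q = cmod \<beta>"
  note bound = shear_opnorm_bound[OF x e xe Q, folded N_def]
  have "5 \<le> 2 * N\<^sup>2"
    using bound[of 1 1] by simp
  have real_bound: "(p + q)\<^sup>2 + q\<^sup>2 \<le> N\<^sup>2 * (p\<^sup>2 + q\<^sup>2)"
    using bound[of "of_real p" "of_real q"] by (simp add: p_def q_def flip: of_real_add)
  have rest: "(norm (h - \<alpha> *s x - \<beta> *s e))\<^sup>2 = 1 - p\<^sup>2 - q\<^sup>2"
    using norm_diff_proj_pair_power2[OF x e xe, of h] h(1) by (simp add: \<alpha>_def \<beta>_def p_def q_def)
  then have "p\<^sup>2 + q\<^sup>2 \<le> 1"
    by (metis diff_diff_eq diff_ge_0_iff_ge zero_le_power2)
  have "N\<^sup>2 = (cmod (\<alpha> + \<beta>))\<^sup>2 + q\<^sup>2"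
    using Q[of h] h(2) by (simp add: N_def \<alpha>_def \<beta>_def q_def)
  also have "\<dots> = p\<^sup>2 + 2 * Re (cnj \<alpha> * \<beta>) + 2 * q\<^sup>2"
    by (simp add: cmod_add_power2 p_def q_def)
  finally have N2: "N\<^sup>2 = p\<^sup>2 + 2 * Re (cnj \<alpha> * \<beta>) + 2 * q\<^sup>2" .
  have "Re (cnj \<alpha> * \<beta>) \<le> p * q"
    using complex_Re_le_cmod[of "cnj \<alpha> * \<beta>"] by (simp add: p_def q_def norm_mult)
  then have "N\<^sup>2 \<le> N\<^sup>2 * (p\<^sup>2 + q\<^sup>2)"
    using N2 real_bound by (simp add: power2_sum)
  then have pq: "p\<^sup>2 + q\<^sup>2 = 1"
    using \<open>p\<^sup>2 + q\<^sup>2 \<le> 1\<close> \<open>5 \<le> 2 * N\<^sup>2\<close> by (cases "N = 0") (simp_all add: mult_le_cancel_left1)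
  then have Re: "Re (cnj \<alpha> * \<beta>) = p * q"
    using N2 real_bound \<open>Re (cnj \<alpha> * \<beta>) \<le> p * q\<close> by (simp add: power2_sum)
  have "(norm (h - \<alpha> *s x - \<beta> *s e))\<^sup>2 = 0"
    using rest pq by simp
  then have "h - \<alpha> *s x - \<beta> *s e = 0"
    by simp
  then show "h = \<alpha> *s x + \<beta> *s e"
    by (simp add: algebra_simps)
  have "p \<noteq> 0" "q \<noteq> 0"
    using N2 Re pq \<open>5 \<le> 2 * N\<^sup>2\<close> by auto
  then show "0 < Re (cnj \<alpha> * \<beta>)"
    using Re by (simp add: p_def q_def)
qed

lemma not_bj_orth_shear:
  fixes A :: "complex^'n^'n"
  assumes x: "norm x = 1" and e: "norm e = 1" and xe: "cinner x e = 0"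
    and y: "norm y = 1" and e': "norm e' = 1" and e'y: "cinner e' y = 0"
    and Ax: "A *v x = of_real a *s y" and a: "0 < a" and Ae: "A *v e = 0"
  shows "\<not> bj_orth (outer e' (x + e) + outer y e) A"
proof (rule not_bj_orth_if_norming_positive)
  let ?B = "outer e' (x + e) + outer y e"
  have Bh: "?B *v h = (cinner x h + cinner e h) *s e' + cinner e h *s y" for h
    by (simp add: matrix_vector_mult_add_rdistrib outer_mult_vec cinner_simps)
  have Q: "(norm (?B *v h))\<^sup>2 = (cmod (cinner x h + cinner e h))\<^sup>2 + (cmod (cinner e h))\<^sup>2" for h
  proof -
    have "cinner ((cinner x h + cinner e h) *s e') (cinner e h *s y) = 0"
      using e'y by (simp only: cinner_scale_left cinner_scale_right mult_zero_right)
    then show ?thesis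
      by (simp only: Bh pythagoras_cinner norm_scale_vec e' y mult_1_right)
  qed
  fix h :: "complex^'n"
  assume h: "norm h = 1" "norm (?B *v h) = opnorm ?B"
  define \<alpha> where "\<alpha> = cinner x h"
  define \<beta> where "\<beta> = cinner e h"
  have "h = \<alpha> *s x + \<beta> *s e" and pos: "0 < Re (cnj \<alpha> * \<beta>)"
    using shear_norming_vectors[OF x e xe Q h] by (simp_all add: \<alpha>_def \<beta>_def)
  then have "A *v h = (\<alpha> * of_real a) *s y"
    by (simp add: vec.add vec.scale Ax Ae)
  then have "cinner (?B *v h) (A *v h) = of_real a * (cnj \<beta> * \<alpha>)"
    using y e'y by (simp add: Bh cinner_simps cinner_self \<alpha>_def \<beta>_def)
  then have "inner (?B *v h) (A *v h) = a * Re (cnj \<alpha> * \<beta>)"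
    by (simp add: Re_cinner[symmetric] algebra_simps)
  then show "0 < inner (?B *v h) (A *v h)"
    using a pos by simp
qed

section \<open>The Hilbert-Schmidt inner product\<close>

definition hs_inner :: "complex^'n^'m \<Rightarrow> complex^'n^'m \<Rightarrow> complex" where
  "hs_inner X Y = (\<Sum>i\<in>UNIV. \<Sum>j\<in>UNIV. cnj (X $ i $ j) * Y $ i $ j)"

lemma hs_inner_diff_left: "hs_inner (X - X') Y = hs_inner X Y - hs_inner X' Y"
  and hs_inner_diff_right: "hs_inner X (Y - Y') = hs_inner X Y - hs_inner X Y'"
  and hs_inner_scale_left: "hs_inner (mat_scale c X) Y = cnj c * hs_inner X Y"
  and hs_inner_scale_right: "hs_inner X (mat_scale c Y) = c * hs_inner X Y"
  and hs_inner_sum_left: "hs_inner (\<Sum>q\<in>Q. Z q) Y = (\<Sum>q\<in>Q. hs_inner (Z q) Y)"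
  by (simp_all add: hs_inner_def mat_scale_def sum_subtractf sum_distrib_left sum_distrib_right
      sum_component algebra_simps sum.swap[of _ Q])

lemma hs_inner_commute: "hs_inner Y X = cnj (hs_inner X Y)"
  by (simp add: hs_inner_def mult.commute)

lemma hs_inner_outer_left: "hs_inner (outer w y) Y = cinner w (Y *v y)"
  by (simp add: hs_inner_def outer_def cinner_def matrix_vector_mult_def sum_distrib_left ac_simps)

lemma hs_inner_self_eq_0: "hs_inner X X = 0 \<Longrightarrow> X = 0"
proof -
  assume "hs_inner X X = 0"
  moreover have "hs_inner X X = of_real (\<Sum>i\<in>UNIV. \<Sum>j\<in>UNIV. (cmod (X $ i $ j))\<^sup>2)"
    by (simp add: hs_inner_def complex_norm_square mult.commute del: of_real_power)
  ultimately have "(\<Sum>i\<in>UNIV. \<Sum>j\<in>UNIV. (cmod (X $ i $ j))\<^sup>2) = 0"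
    by (metis of_real_eq_0_iff)
  then show "X = 0"
    by (simp add: sum_nonneg_eq_0_iff sum_nonneg vec_eq_iff)
qed

text \<open>The equality case of the bound of the operator norm by the Hilbert-Schmidt norm.\<close>
lemma eq_outer_if_hs_inner_self:
  assumes x: "norm x = 1" and y: "norm y = 1" and Ax: "A *v x = of_real a *s y"
    and hs: "hs_inner A A = of_real (a\<^sup>2)"
  shows "A = mat_scale (of_real a) (outer y x)"
proof -
  let ?O = "outer y x"
  have "hs_inner ?O A = of_real a"
    using y by (simp add: hs_inner_outer_left Ax cinner_simps cinner_self)
  moreover have "hs_inner ?O ?O = 1"
    using x y by (simp add: hs_inner_outer_left outer_mult_vec cinner_simps cinner_self)
  ultimately have "hs_inner (A - mat_scale (of_real a) ?O) (A - mat_scale (of_real a) ?O) = 0"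
    using hs by (simp add: hs_inner_diff_left hs_inner_diff_right hs_inner_scale_left
        hs_inner_scale_right hs_inner_commute[of A ?O] power2_eq_square)
  then show ?thesis
    using hs_inner_self_eq_0 by fastforce
qed

section \<open>Orthogonal vectors and dual families\<close>

text \<open>Real orthogonality to both g and i g is complex orthogonality to g, so it suffices to
  find a nonzero vector of the real space complex^'n orthogonal to fewer than 2 CARD('n) vectors.\<close>
lemma exists_orthogonal_nonzero:
  fixes T :: "(complex^'n) set"
  assumes "finite T" "card T < CARD('n)"
  shows "\<exists>e. e \<noteq> 0 \<and> (\<forall>g\<in>T. cinner g e = 0)"
proof -
  define S where "S = T \<union> (\<lambda>g. \<i> *s g) ` T"
  have "card S \<le> 2 * card T"
    using card_Un_le[of T "(\<lambda>g. \<i> *s g) ` T"] card_image_le[OF assms(1), of "\<lambda>g. \<i> *s g"]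
    unfolding S_def by linarith
  moreover have "dim S \<le> card S"
    using assms(1) by (intro dim_le_card) (auto simp: S_def intro: span_base)
  ultimately have "dim S < DIM(complex^'n)"
    using assms(2) by simp
  then obtain e :: "complex^'n" where "e \<noteq> 0" and e: "span S \<subseteq> {z. e \<bullet> z = 0}"
    using lowdim_subset_hyperplane by blast
  have "cinner g e = 0" if "g \<in> T" for g
  proof -
    have "g \<in> span S" "\<i> *s g \<in> span S"
      using that by (auto simp: S_def intro: span_base)
    then have "e \<bullet> g = 0" "e \<bullet> (\<i> *s g) = 0"
      using e by auto
    then have "Re (cinner g e) = 0" "Re (cinner (\<i> *s g) e) = 0"
      by (simp_all add: Re_cinner inner_commute)
    then show ?thesis
      by (simp add: cinner_scale_left complex_eq_iff)
  qed
  with \<open>e \<noteq> 0\<close> show ?thesis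
    by blast
qed

lemma exists_unit_orthogonal:
  fixes g :: "nat \<Rightarrow> complex^'n"
  assumes "e \<noteq> 0" "\<forall>q\<le>k. cinner (g q) e = 0"
  shows "\<exists>e. norm e = 1 \<and> (\<forall>q\<le>k. cinner (g q) e = 0)"
  using assms by (intro exI[of _ "of_real (inverse (norm e)) *s e"])
    (simp add: norm_scale_vec norm_inverse cinner_scale_right)

lemma dual_family_exists:
  fixes g :: "nat \<Rightarrow> complex^'n"
  assumes span: "\<And>e. \<forall>q\<le>k. cinner (g q) e = 0 \<Longrightarrow> e = 0" and k: "k < CARD('n)"
  obtains g' where "\<And>p q. p \<le> k \<Longrightarrow> q \<le> k \<Longrightarrow> cinner (g p) (g' q) = (if p = q then 1 else 0)"
proof -
  have "\<exists>y. \<forall>p\<le>k. cinner (g p) y = (if p = q then 1 else 0)" if "q \<le> k" for q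
  proof -
    have "card (g ` ({..k} - {q})) < CARD('n)"
      using card_image_le[of "{..k} - {q}" g] that k by simp
    then obtain y where "y \<noteq> 0" and y: "\<forall>p\<le>k. p \<noteq> q \<longrightarrow> cinner (g p) y = 0"
      using exists_orthogonal_nonzero[of "g ` ({..k} - {q})"] by auto
    then have "cinner (g q) y \<noteq> 0"
      using span by blast
    with y show ?thesis
      by (intro exI[of _ "inverse (cinner (g q) y) *s y"]) (simp add: cinner_scale_right)
  qed
  then show ?thesis
    using that by metis
qed

lemma expansion_dual_family:
  fixes g g' :: "nat \<Rightarrow> complex^'n"
  assumes span: "\<And>e. \<forall>q\<le>k. cinner (g q) e = 0 \<Longrightarrow> e = 0"
    and dual: "\<And>p q. p \<le> k \<Longrightarrow> q \<le> k \<Longrightarrow> cinner (g p) (g' q) = (if p = q then 1 else 0)"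
  shows "h = (\<Sum>q\<le>k. cinner (g q) h *s g' q)"
proof -
  have "cinner (g p) (\<Sum>q\<le>k. cinner (g q) h *s g' q) = cinner (g p) h" if "p \<le> k" for p
  proof -
    have "cinner (g p) (\<Sum>q\<le>k. cinner (g q) h *s g' q) = (\<Sum>q\<le>k. cinner (g q) h * cinner (g p) (g' q))"
      by (simp add: cinner_sum_right cinner_scale_right)
    also have "\<dots> = (\<Sum>q\<le>k. if q = p then cinner (g q) h else 0)"
      by (rule sum.cong) (auto simp: dual that)
    also have "\<dots> = cinner (g p) h"
      using that by simp
    finally show ?thesis .
  qed
  then show ?thesis
    using span[of "h - (\<Sum>q\<le>k. cinner (g q) h *s g' q)"] by (simp add: cinner_diff_right)
qed

section \<open>Left-symmetric matrices\<close>

lemma dual_image_parallel: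
  fixes A :: "complex^'n^'n" and f g g' :: "nat \<Rightarrow> complex^'n"
  assumes sym: "\<And>B. \<forall>q\<le>k. cinner (f q) (B *v g q) = 0 \<Longrightarrow> bj_orth B A"
    and dual: "\<And>p q. p \<le> k \<Longrightarrow> q \<le> k \<Longrightarrow> cinner (g p) (g' q) = (if p = q then 1 else 0)"
    and q: "q \<le> k"
  shows "\<exists>d. A *v g' q = d *s f q"
proof -
  define d where "d = cinner (f q) (A *v g' q) / of_real ((norm (f q))\<^sup>2)"
  define w where "w = A *v g' q - d *s f q"
  have fw: "cinner (f q) w = 0"
    by (cases "f q = 0") (simp_all add: w_def d_def cinner_simps cinner_self)
  have "\<forall>j\<le>k. cinner (f j) (outer w (g' q) *v g j) = 0"
    using dual[OF _ q] fw by (auto simp: outer_mult_vec cinner_scale_right cinner_commute[of "g' q"])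
  then have "bj_orth (outer w (g' q)) A"
    by (rule sym)
  moreover have "A *v g' q = w + d *s f q"
    by (simp add: w_def)
  then have "Re (cinner w (A *v g' q)) = (norm w)\<^sup>2"
    using fw by (simp add: cinner_simps cinner_self cinner_commute[of w])
  ultimately have "w = 0"
    using not_bj_orth_outer[of w A "g' q"] by fastforce
  then show ?thesis
    by (auto simp: w_def)
qed

lemma eq_outer_if_spanning:
  fixes A :: "complex^'n^'n" and f g :: "nat \<Rightarrow> complex^'n"
  assumes span: "\<And>e. \<forall>q\<le>k. cinner (g q) e = 0 \<Longrightarrow> e = 0" and k: "k < CARD('n)"
    and sym: "\<And>B. \<forall>q\<le>k. cinner (f q) (B *v g q) = 0 \<Longrightarrow> bj_orth B A"
    and AV: "\<And>q. 0 < q \<Longrightarrow> q \<le> k \<Longrightarrow> cinner (f q) (A *v g q) = 0"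
    and g0: "g 0 = x" and f0: "f 0 = y" and x: "norm x = 1" and y: "norm y = 1"
    and Ax: "A *v x = of_real a *s y" and Ay: "conj_transpose A *v y = of_real a *s x"
  shows "A = mat_scale (of_real a) (outer y x)"
proof -
  obtain g' where dual: "\<And>p q. p \<le> k \<Longrightarrow> q \<le> k \<Longrightarrow> cinner (g p) (g' q) = (if p = q then 1 else 0)"
    using dual_family_exists[OF span k] by blast
  obtain d where Ag': "\<And>q. q \<le> k \<Longrightarrow> A *v g' q = d q *s f q"
    using dual_image_parallel[OF sym dual] by metis
  have rep: "A = (\<Sum>q\<le>k. mat_scale (d q) (outer (f q) (g q)))"
  proof (rule matrix_eq[THEN iffD2], rule allI)
    fix h :: "complex^'n"
    have "A *v h = A *v (\<Sum>q\<le>k. cinner (g q) h *s g' q)"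
      using expansion_dual_family[OF span dual] by metis
    also have "\<dots> = (\<Sum>q\<le>k. mat_scale (d q) (outer (f q) (g q)) *v h)"
      by (simp add: vec.sum vec.scale Ag' mat_scale_mult_vec outer_mult_vec mult.commute)
    finally show "A *v h = (\<Sum>q\<le>k. mat_scale (d q) (outer (f q) (g q))) *v h"
      by (simp add: sum_matrix_vector_mult)
  qed
  have "d 0 = cinner y (A *v g' 0)"
    using Ag'[of 0] f0 y by (simp add: cinner_simps cinner_self)
  also have "\<dots> = of_real a"
    using dual[of 0 0] g0 by (simp add: cinner_conj_transpose Ay cinner_simps)
  finally have d0: "d 0 = of_real a" .
  have "hs_inner A A = (\<Sum>q\<le>k. cnj (d q) * cinner (f q) (A *v g q))"
    by (subst (1) rep) (simp add: hs_inner_sum_left hs_inner_scale_left hs_inner_outer_left)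
  also have "\<dots> = (\<Sum>q\<le>k. if q = 0 then cnj (d 0) * cinner y (A *v x) else 0)"
    by (rule sum.cong) (auto simp: AV g0 f0)
  also have "\<dots> = of_real (a\<^sup>2)"
    using y by (simp add: d0 Ax cinner_simps cinner_self power2_eq_square)
  finally show ?thesis
    by (rule eq_outer_if_hs_inner_self[OF x y Ax])
qed

lemma spanning_if_orthogonal_to_constrained:
  fixes A :: "complex^'n^'n" and f g :: "nat \<Rightarrow> complex^'n"
  assumes sym: "\<And>B. \<forall>q\<le>k. cinner (f q) (B *v g q) = 0 \<Longrightarrow> bj_orth B A"
    and g0: "g 0 = x" and f0: "f 0 = y" and x: "norm x = 1" and y: "norm y = 1"
    and Ax: "A *v x = of_real a *s y" and a: "0 < a"
  shows "(\<forall>e. (\<forall>q\<le>k. cinner (g q) e = 0) \<longrightarrow> e = 0) \<or> (\<forall>e. (\<forall>q\<le>k. cinner (f q) e = 0) \<longrightarrow> e = 0)"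
proof (rule ccontr)
  assume "\<not> ?thesis"
  then obtain e0 e0' where e0: "e0 \<noteq> 0" "\<forall>q\<le>k. cinner (g q) e0 = 0"
    and e0': "e0' \<noteq> 0" "\<forall>q\<le>k. cinner (f q) e0' = 0"
    by blast
  obtain e where e: "norm e = 1" "\<forall>q\<le>k. cinner (g q) e = 0"
    using exists_unit_orthogonal[OF e0] by blast
  obtain e' where e': "norm e' = 1" "\<forall>q\<le>k. cinner (f q) e' = 0"
    using exists_unit_orthogonal[OF e0'] by blast
  have eg: "cinner e (g q) = 0" if "q \<le> k" for q
    using e(2) that by (simp add: cinner_commute[of e])
  show False
  proof (cases "A *v e = 0")
    case False
    have "bj_orth (outer (A *v e) e) A"
      by (rule sym) (simp add: outer_mult_vec eg cinner_simps)
    moreover have "\<not> bj_orth (outer (A *v e) e) A"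
      using False by (intro not_bj_orth_outer) (simp add: cinner_self)
    ultimately show False
      by contradiction
  next
    case True
    let ?B = "outer e' (x + e) + outer y e"
    have "bj_orth ?B A"
      by (rule sym) (simp add: matrix_vector_mult_add_rdistrib outer_mult_vec cinner_simps eg e'(2))
    moreover have "\<not> bj_orth ?B A"
    proof (rule not_bj_orth_shear[OF x e(1) _ y e'(1) _ Ax a True])
      show "cinner x e = 0" "cinner e' y = 0"
        using e(2) e'(2) g0 f0 by (auto simp: cinner_commute[of e'])
    qed
    ultimately show False
      by contradiction
  qed
qed

lemma eq_outer_if_orthogonal_to_constrained:
  fixes A :: "complex^'n^'n" and f g :: "nat \<Rightarrow> complex^'n"
  assumes k: "k < CARD('n)"
    and sym: "\<And>B. \<forall>q\<le>k. cinner (f q) (B *v g q) = 0 \<Longrightarrow> bj_orth B A"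
    and AV: "\<And>q. 0 < q \<Longrightarrow> q \<le> k \<Longrightarrow> cinner (f q) (A *v g q) = 0"
    and g0: "g 0 = x" and f0: "f 0 = y" and x: "norm x = 1" and y: "norm y = 1"
    and Ax: "A *v x = of_real a *s y" and Ay: "conj_transpose A *v y = of_real a *s x"
    and a: "0 < a"
  shows "A = mat_scale (of_real a) (outer y x)"
proof -
  have "(\<forall>e. (\<forall>q\<le>k. cinner (g q) e = 0) \<longrightarrow> e = 0) \<or> (\<forall>e. (\<forall>q\<le>k. cinner (f q) e = 0) \<longrightarrow> e = 0)"
    by (rule spanning_if_orthogonal_to_constrained) (fact sym g0 f0 x y Ax a)+
  then show ?thesis
  proof (elim disjE)
    assume "\<forall>e. (\<forall>q\<le>k. cinner (g q) e = 0) \<longrightarrow> e = 0"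
    then show ?thesis
      using eq_outer_if_spanning[of k g f A x y a, OF _ k sym AV g0 f0 x y Ax Ay] by blast
  next
    assume span: "\<forall>e. (\<forall>q\<le>k. cinner (f q) e = 0) \<longrightarrow> e = 0"
    \<comment> \<open>Passing to adjoints exchanges the roles of f and g, and of x and y.\<close>
    have "bj_orth B (conj_transpose A)" if "\<forall>q\<le>k. cinner (g q) (B *v f q) = 0" for B
    proof -
      have "\<forall>q\<le>k. cinner (f q) (conj_transpose B *v g q) = 0"
        using that by (simp add: cinner_conj_transpose[symmetric] cinner_commute[of "f _"])
      then show ?thesis
        using bj_orth_conj_transpose[OF sym] by fastforce
    qed
    moreover have "cinner (g q) (conj_transpose A *v f q) = 0" if "0 < q" "q \<le> k" for q
      using AV[OF that] by (simp add: cinner_conj_transpose[symmetric] cinner_commute[of "g q"])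
    ultimately have "conj_transpose A = mat_scale (of_real a) (outer x y)"
      using span k f0 g0 x y Ay Ax by (intro eq_outer_if_spanning[where f = g and g = f]) auto
    then show ?thesis
      by (metis conj_transpose_conj_transpose conj_transpose_mat_scale conj_transpose_outer
          complex_cnj_complex_of_real)
  qed
qed

lemma left_symmetric_rank_one:
  fixes A :: "complex^'n^'n" and u v :: "nat \<Rightarrow> complex^'n"
  assumes k: "k < CARD('n)" and "A \<noteq> 0"
    and sym: "left_symmetric_in {X. \<forall>i<k. sesq (v i) X (u i) = 0} A"
  shows "rank A = 1"
proof -
  obtain x where x: "norm x = 1" "norm (A *v x) = opnorm A"
    using opnorm_attained by blast
  define a where "a = opnorm A"
  have a: "0 < a"
    using opnorm_pos[OF \<open>A \<noteq> 0\<close>] by (simp add: a_def)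
  define y where "y = of_real (inverse a) *s (A *v x)"
  have y: "norm y = 1"
    using x a by (simp add: y_def norm_scale_vec norm_inverse a_def)
  have Ax: "A *v x = of_real a *s y"
    using a by (simp add: y_def vector_smult_assoc)
  have Ay: "conj_transpose A *v y = of_real a *s x"
    using opnorm_attained_singular[OF x] a
    by (simp add: y_def vec.scale vector_smult_assoc a_def power2_eq_square)
  \<comment> \<open>The constraint with index 0, y^* B x = 0, makes every admissible B orthogonal to A.\<close>
  define g where "g q = (if q = 0 then x else u (q - 1))" for q
  define f where "f q = (if q = 0 then y else v (q - 1))" for q
  have "bj_orth B A" if B: "\<forall>q\<le>k. cinner (f q) (B *v g q) = 0" for B
  proof -
    have "sesq (v i) B (u i) = 0" if "i < k" for i
      using B[rule_format, of "Suc i"] that by (simp add: sesq_eq_cinner f_def g_def)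
    moreover have "bj_orth A B"
      using B[rule_format, of 0] by (intro bj_orth_if_norming_orthogonal[OF x])
        (simp add: Ax f_def g_def cinner_simps)
    ultimately show ?thesis
      using sym by (simp add: left_symmetric_in_def)
  qed
  moreover have "cinner (f q) (A *v g q) = 0" if "0 < q" "q \<le> k" for q
    using sym that by (simp add: left_symmetric_in_def sesq_eq_cinner f_def g_def)
  ultimately have "A = mat_scale (of_real a) (outer y x)"
    using k x(1) y Ax Ay a
    by (intro eq_outer_if_orthogonal_to_constrained[where f = f and g = g]) (auto simp: f_def g_def)
  then show ?thesis
    using \<open>A \<noteq> 0\<close> rank_outer by (metis mat_scale_outer)
qed

theorem lemma3p2:
  fixes v u :: "nat \<Rightarrow> complex^'n" and k :: nat and A :: "complex^'n^'n"
  assumes "CARD('n) \<ge> 2"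
    and "k \<le> CARD('n) - 1"
    and "\<And>i. i < k \<Longrightarrow> norm (v i) = 1"
    and "\<And>i. i < k \<Longrightarrow> norm (u i) = 1"
    and "A \<noteq> 0"
    and "left_symmetric_in {X. \<forall>i<k. sesq (v i) X (u i) = 0} A"
  shows "rank A = 1 \<or> rank A = CARD('n)"
proof -
  have "k < CARD('n)"
    using assms(1,2) by linarith
  then show ?thesis
    using left_symmetric_rank_one assms(5,6) by blast
qed

end
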